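(* Let $\mathcal{G}$ be a class of graphs with bounded expansion, and let $s\in\mathbb{N}$. Then there exists an integer $d=d(\mathcal{G},s)$ such that every $K_{2,s}$-free graph $G\in\mathcal{G}$ is strongly $d$-degenerate and hence satisfies $\mathrm{HG}(G)\le(2d)^d$.
   Context: A graph $H$ is a shallow minor of $G$ at depth $r$ (integer $r\ge0$) if there are disjoint sets $V_1,\dots,V_p\subseteq V(G)$ such that each $G[V_i]$ contains a vertex $x_i$ with every vertex of $V_i$ at distance at most $r$ from $x_i$ in $G[V_i]$, and $H$ is (isomorphic to) a subgraph of the graph obtained by contracting each $V_i$ to a single vertex (two contracted vertices adjacent iff some edge joins the corresponding sets). $\nabla_r(G)$ is the maximum of $e(H)/v(H)$ over all non-empty shallow minors $H$ of $G$ at depth $r$. A class $\mathcal{G}$ has bounded expansion if for every integer $r\ge0$ there is a constant $C_r$ with $\nabla_r(G)\le C_r$ for all $G\in\mathcal{G}$. A graph is $K_{2,s}$-free if it has no subgraph isomorphic to $K_{2,s}$. For an integer $d\ge1$, a vertex $v$ of $G$ is $d$-removable in $G$ if $d_G(v)\le d$ and at most one neighbour $w$ of $v$ has $d_G(w)>d$; $G$ is strongly $d$-degenerate if every non-empty subgraph $G'$ of $G$ contains a vertex $d$-removable in $G'$. Hat guessing number $\mathrm{HG}(G)$: the largest $q$ such that there are functions $f_v\colon[q]^{N_G(v)}\to[q]$ ($v\in V(G)$) with the property that for every colouring $c\colon V(G)\to[q]$ some $v$ has $f_v((c(w))_{w\in N_G(v)})=c(v)$. *)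

theory Defs
  imports Complex_Main "HOL-Library.FuncSet"
begin

type_synonym 'a graph = "'a set \<times> 'a set set"

definition verts :: "'a graph \<Rightarrow> 'a set" where "verts G = fst G"
definition edges :: "'a graph \<Rightarrow> 'a set set" where "edges G = snd G"

definition graph :: "'a graph \<Rightarrow> bool" where
  "graph G \<longleftrightarrow> finite (verts G) \<and>
     (\<forall>e\<in>edges G. \<exists>u v. e = {u, v} \<and> u \<noteq> v \<and> u \<in> verts G \<and> v \<in> verts G)"

definition nbrs :: "'a graph \<Rightarrow> 'a \<Rightarrow> 'a set" where
  "nbrs G v = {w \<in> verts G. {v, w} \<in> edges G}"

definition degree :: "'a graph \<Rightarrow> 'a \<Rightarrow> nat" where
  "degree G v = card (nbrs G v)"

definition subgraph :: "'a graph \<Rightarrow> 'a graph \<Rightarrow> bool" where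
  "subgraph H G \<longleftrightarrow> graph H \<and> verts H \<subseteq> verts G \<and> edges H \<subseteq> edges G"

fun reach_in :: "'a set set \<Rightarrow> 'a set \<Rightarrow> 'a \<Rightarrow> nat \<Rightarrow> 'a \<Rightarrow> bool" where
  "reach_in E S x 0 y \<longleftrightarrow> x \<in> S \<and> y = x"
| "reach_in E S x (Suc n) y \<longleftrightarrow> reach_in E S x n y \<or>
     (\<exists>z. reach_in E S x n z \<and> y \<in> S \<and> {z, y} \<in> E)"

text \<open>H is a shallow minor of G at depth r: there are disjoint branch sets
  B 0, ..., B (p-1) of radius at most r (in the induced subgraphs), and H is
  isomorphic (via the injective edge-preserving map f) to a subgraph of the
  graph obtained by contracting each branch set.\<close>
definition shallow_minor :: "nat \<Rightarrow> 'a graph \<Rightarrow> 'b graph \<Rightarrow> bool" where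
  "shallow_minor r G H \<longleftrightarrow> graph H \<and>
    (\<exists>(p::nat) (B::nat \<Rightarrow> 'a set) (f::'b \<Rightarrow> nat).
       (\<forall>i<p. B i \<subseteq> verts G \<and> (\<exists>x\<in>B i. \<forall>y\<in>B i. reach_in (edges G) (B i) x r y)) \<and>
       (\<forall>i<p. \<forall>j<p. i \<noteq> j \<longrightarrow> B i \<inter> B j = {}) \<and>
       inj_on f (verts H) \<and> f ` verts H \<subseteq> {..<p} \<and>
       (\<forall>u\<in>verts H. \<forall>v\<in>verts H. {u, v} \<in> edges H \<longrightarrow>
          (\<exists>a\<in>B (f u). \<exists>b\<in>B (f v). {a, b} \<in> edges G)))"

text \<open>nabla_r(G) \<le> C, i.e. e(H)/v(H) \<le> C for every non-empty shallow minor H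
  at depth r (shallow minors are taken up to isomorphism, represented on
  vertex type nat).\<close>
definition nabla_le :: "nat \<Rightarrow> 'a graph \<Rightarrow> real \<Rightarrow> bool" where
  "nabla_le r G C \<longleftrightarrow> (\<forall>H :: nat graph. shallow_minor r G H \<and> verts H \<noteq> {} \<longrightarrow>
      real (card (edges H)) / real (card (verts H)) \<le> C)"

definition bounded_expansion :: "'a graph set \<Rightarrow> bool" where
  "bounded_expansion \<G> \<longleftrightarrow> (\<forall>r. \<exists>C. \<forall>G\<in>\<G>. nabla_le r G C)"

definition K2s_free :: "nat \<Rightarrow> 'a graph \<Rightarrow> bool" where
  "K2s_free s G \<longleftrightarrow> \<not> (\<exists>a b S. a \<in> verts G \<and> b \<in> verts G \<and> a \<noteq> b \<and>
      S \<subseteq> verts G - {a, b} \<and> card S = s \<and> finite S \<and>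
      (\<forall>x\<in>S. {a, x} \<in> edges G \<and> {b, x} \<in> edges G))"

definition removable :: "nat \<Rightarrow> 'a graph \<Rightarrow> 'a \<Rightarrow> bool" where
  "removable d G v \<longleftrightarrow> v \<in> verts G \<and> degree G v \<le> d \<and>
     card {w \<in> nbrs G v. degree G w > d} \<le> 1"

definition strongly_degenerate :: "nat \<Rightarrow> 'a graph \<Rightarrow> bool" where
  "strongly_degenerate d G \<longleftrightarrow>
     (\<forall>G'. subgraph G' G \<and> verts G' \<noteq> {} \<longrightarrow> (\<exists>v. removable d G' v))"

text \<open>q colours {0..<q}; f v sees the colouring restricted to the
  neighbourhood of v.\<close>
definition hat_guessing_win :: "'a graph \<Rightarrow> nat \<Rightarrow> bool" where
  "hat_guessing_win G q \<longleftrightarrow> (\<exists>f :: 'a \<Rightarrow> ('a \<Rightarrow> nat) \<Rightarrow> nat.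
     (\<forall>v\<in>verts G. \<forall>g. f v g < q) \<and>
     (\<forall>c. (\<forall>v\<in>verts G. c v < q) \<longrightarrow>
        (\<exists>v\<in>verts G. f v (restrict c (nbrs G v)) = c v)))"

end

theory Submission
  imports Defs
begin

text \<open>
  Let C bound the edge density of the depth-1 minors of G, and suppose a subgraph
  H of G has no removable vertex. Every vertex of degree at most d then has two neighbours of
  degree > d; call them its pair. Contracting each low-degree vertex into the first vertex of
  its pair is a depth-1 minor on the high-degree vertices whose edges include all pairs, so
  there are at most C |high| pairs, and by K_{2,s}-freeness each pair serves at most s
  low-degree vertices. Hence |V(H)| <= (1 + sC) |high|, while the high-degree vertices alone
  give (d + 1) |high| <= 2 e(H) <= 2C |V(H)|. This is impossible once d + 1 > 2C (1 + sC).

  We show by induction that a strongly d-degenerate graph can be coloured with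
  palette d colours avoiding forbidden sets F w c, which depend only on the colours of the
  neighbours of w and have size at most (4d)^(d - deg w). Remove a removable vertex u; for a
  neighbour w of u, forbid in the smaller graph the colours that F w forbids for many colours
  of u. A double count bounds these new sets, and a colouring of the smaller graph leaves
  some colour for u. Applied to the singleton sets given by the guessing functions, this
  yields a colouring on which every guess is wrong.
\<close>

lemma graph_finite_verts: "graph G \<Longrightarrow> finite (verts G)"
  by (simp add: graph_def)

lemma graph_edgeE:
  assumes "graph G" "e \<in> edges G"
  obtains u v where "e = {u, v}" "u \<noteq> v" "u \<in> verts G" "v \<in> verts G"
  using assms unfolding graph_def by blast

lemma graph_edge_verts:
  assumes "graph G" "{u, v} \<in> edges G"
  shows "u \<in> verts G" "v \<in> verts G"
  using assms by (auto elim!: graph_edgeE simp: doubleton_eq_iff)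

lemma graph_edge_neq: "graph G \<Longrightarrow> {u, v} \<in> edges G \<Longrightarrow> u \<noteq> v"
  by (auto elim!: graph_edgeE simp: doubleton_eq_iff)

lemma edges_subset_Pow_verts: "graph G \<Longrightarrow> edges G \<subseteq> Pow (verts G)"
  by (auto elim: graph_edgeE)

lemma graph_finite_edges: "graph G \<Longrightarrow> finite (edges G)"
  by (meson edges_subset_Pow_verts finite_Pow_iff finite_subset graph_finite_verts)

lemma nbrs_subset_verts: "nbrs G v \<subseteq> verts G"
  by (auto simp: nbrs_def)

lemma graph_finite_nbrs: "graph G \<Longrightarrow> finite (nbrs G v)"
  by (meson finite_subset graph_finite_verts nbrs_subset_verts)

lemma self_notin_nbrs: "graph G \<Longrightarrow> v \<notin> nbrs G v"
  by (auto simp: nbrs_def elim: graph_edgeE)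

lemma nbrs_sym: "v \<in> verts G \<Longrightarrow> w \<in> nbrs G v \<Longrightarrow> v \<in> nbrs G w"
  by (simp add: nbrs_def insert_commute)

lemma sum_degree_le:
  assumes G: "graph G"
  shows "(\<Sum>v\<in>verts G. degree G v) \<le> 2 * card (edges G)"
proof -
  define ends where "ends e = {(x, y). x \<in> e \<and> y \<in> e \<and> x \<noteq> y}" for e :: "'a set"
  have ends: "finite (ends e) \<and> card (ends e) \<le> 2" if e: "e \<in> edges G" for e
  proof -
    obtain u v where "e = {u, v}" "u \<noteq> v" using graph_edgeE[OF G e] by metis
    then have "ends e = {(u, v), (v, u)}" by (auto simp: ends_def)
    then show ?thesis by (simp add: card_insert_le_m1)
  qed
  have "(\<Sum>v\<in>verts G. degree G v) = card (SIGMA v:verts G. nbrs G v)"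
    using G by (simp add: degree_def graph_finite_verts graph_finite_nbrs card_SigmaI)
  also have "\<dots> \<le> card (\<Union>e\<in>edges G. ends e)"
  proof (rule card_mono)
    show "finite (\<Union>e\<in>edges G. ends e)" using G ends by (simp add: graph_finite_edges)
    show "(SIGMA v:verts G. nbrs G v) \<subseteq> (\<Union>e\<in>edges G. ends e)"
    proof (clarify)
      fix v w assume "v \<in> verts G" "w \<in> nbrs G v"
      then have "{v, w} \<in> edges G" "v \<noteq> w" using self_notin_nbrs[OF G] by (auto simp: nbrs_def)
      then show "(v, w) \<in> (\<Union>e\<in>edges G. ends e)" by (auto simp: ends_def)
    qed
  qed
  also have "\<dots> \<le> (\<Sum>e\<in>edges G. card (ends e))" by (rule card_UN_le) (rule graph_finite_edges[OF G])
  also have "\<dots> \<le> (\<Sum>e\<in>edges G. 2)" using ends by (intro sum_mono) auto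
  finally show ?thesis by simp
qed

definition delete_vertex :: "'a graph \<Rightarrow> 'a \<Rightarrow> 'a graph" where
  "delete_vertex G u = (verts G - {u}, {e \<in> edges G. u \<notin> e})"

lemma verts_delete_vertex [simp]: "verts (delete_vertex G u) = verts G - {u}"
  and edges_delete_vertex [simp]: "edges (delete_vertex G u) = {e \<in> edges G. u \<notin> e}"
  by (simp_all add: delete_vertex_def verts_def edges_def)

lemma subgraph_delete_vertex:
  assumes "graph G" shows "subgraph (delete_vertex G u) G"
  using assms by (fastforce simp: subgraph_def graph_def)

lemma nbrs_delete_vertex: "w \<noteq> u \<Longrightarrow> nbrs (delete_vertex G u) w = nbrs G w - {u}"
  by (auto simp: nbrs_def)

lemma degree_delete_vertex_nbr:
  assumes "graph G" "u \<in> verts G" "w \<in> nbrs G u"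
  shows "degree G w = Suc (degree (delete_vertex G u) w)"
proof -
  have "u \<in> nbrs G w" "w \<noteq> u" using assms nbrs_sym self_notin_nbrs by metis+
  then show ?thesis
    using card_Suc_Diff1[OF graph_finite_nbrs[OF assms(1)]]
    by (simp add: degree_def nbrs_delete_vertex)
qed

lemma degree_delete_vertex_non_nbr:
  assumes "w \<in> verts G" "w \<noteq> u" "w \<notin> nbrs G u"
  shows "degree (delete_vertex G u) w = degree G w"
proof -
  have "u \<notin> nbrs G w" using assms nbrs_sym by metis
  then show ?thesis using assms(2) by (simp add: degree_def nbrs_delete_vertex)
qed

lemma subgraph_trans: "subgraph H G' \<Longrightarrow> subgraph G' G \<Longrightarrow> subgraph H G"
  by (auto simp: subgraph_def)

lemma strongly_degenerate_subgraph:
  "strongly_degenerate d G \<Longrightarrow> subgraph H G \<Longrightarrow> strongly_degenerate d H"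
  unfolding strongly_degenerate_def by (meson subgraph_trans)

lemma strongly_degenerate_mono:
  assumes "d \<le> D" "strongly_degenerate d G"
  shows "strongly_degenerate D G"
  unfolding strongly_degenerate_def
proof (intro allI impI)
  fix H :: "'a graph" assume H: "subgraph H G \<and> verts H \<noteq> {}"
  then obtain v where v: "removable d H v" using assms(2) unfolding strongly_degenerate_def by blast
  have "card {w \<in> nbrs H v. D < degree H w} \<le> card {w \<in> nbrs H v. d < degree H w}"
    using H assms(1) by (intro card_mono) (auto simp: subgraph_def graph_finite_nbrs)
  then have "removable D H v" using v assms(1) by (auto simp: removable_def)
  then show "\<exists>v. removable D H v" ..
qed

lemma reach_in_refl: "x \<in> S \<Longrightarrow> reach_in E S x n x"
  by (induction n) auto

lemma shallow_minor_of_branch_sets: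
  assumes H: "graph H"
    and branch: "\<forall>a\<in>verts H. B a \<subseteq> verts G \<and> a \<in> B a \<and> (\<forall>y\<in>B a. reach_in (edges G) (B a) a r y)"
    and disjoint: "\<forall>a\<in>verts H. \<forall>b\<in>verts H. a \<noteq> b \<longrightarrow> B a \<inter> B b = {}"
    and contracted: "\<forall>a\<in>verts H. \<forall>b\<in>verts H. {a, b} \<in> edges H \<longrightarrow> (\<exists>x\<in>B a. \<exists>y\<in>B b. {x, y} \<in> edges G)"
  shows "shallow_minor r G H"
proof -
  define m where "m = card (verts H)"
  obtain g where g: "bij_betw g (verts H) {..<m}"
    using ex_bij_betw_finite_nat[OF graph_finite_verts[OF H]] by (auto simp: m_def atLeast0LessThan)
  define h where "h = inv_into (verts H) g"
  have h: "h i \<in> verts H" "g (h i) = i" if "i < m" for i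
    using that g by (auto simp: h_def bij_betw_def inv_into_into f_inv_into_f)
  have hg: "h (g a) = a" if "a \<in> verts H" for a
    using that g by (simp add: h_def bij_betw_def)
  show ?thesis
    unfolding shallow_minor_def
  proof (intro conjI exI[of _ m] exI[of _ "B \<circ> h"] exI[of _ g])
    show "\<forall>i<m. (B \<circ> h) i \<subseteq> verts G \<and>
        (\<exists>x\<in>(B \<circ> h) i. \<forall>y\<in>(B \<circ> h) i. reach_in (edges G) ((B \<circ> h) i) x r y)"
      using branch h(1) by fastforce
    show "\<forall>i<m. \<forall>j<m. i \<noteq> j \<longrightarrow> (B \<circ> h) i \<inter> (B \<circ> h) j = {}"
      using disjoint h by (metis comp_apply)
    show "inj_on g (verts H)" "g ` verts H \<subseteq> {..<m}"
      using g by (auto simp: bij_betw_def)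
    show "\<forall>u\<in>verts H. \<forall>v\<in>verts H. {u, v} \<in> edges H \<longrightarrow>
        (\<exists>a\<in>(B \<circ> h) (g u). \<exists>b\<in>(B \<circ> h) (g v). {a, b} \<in> edges G)"
      using contracted hg by simp
  qed (rule H)
qed

lemma subgraph_imp_shallow_minor:
  assumes "subgraph H G" shows "shallow_minor r G H"
  using assms
  by (intro shallow_minor_of_branch_sets[where B = "\<lambda>a. {a}"]) (auto simp: subgraph_def reach_in_refl)

lemma shallow_minor_graph: "shallow_minor r G H \<Longrightarrow> graph H"
  by (simp add: shallow_minor_def)

lemma graph_image:
  assumes H: "graph H" and f: "inj_on f (verts H)"
  shows "graph (f ` verts H, image f ` edges H)" (is "graph ?H")
proof -
  have verts: "verts ?H = f ` verts H" and edges: "edges ?H = image f ` edges H"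
    by (simp_all add: verts_def edges_def)
  show ?thesis
    unfolding graph_def verts edges
  proof (intro conjI ballI)
    show "finite (f ` verts H)" using H by (simp add: graph_finite_verts)
    fix e assume "e \<in> image f ` edges H"
    then obtain u v where "e = {f u, f v}" "u \<noteq> v" "u \<in> verts H" "v \<in> verts H"
      by (auto elim: graph_edgeE[OF H])
    then show "\<exists>x y. e = {x, y} \<and> x \<noteq> y \<and> x \<in> f ` verts H \<and> y \<in> f ` verts H"
      using f by (auto dest: inj_onD)
  qed
qed

lemma edge_imageE:
  assumes H: "graph H" and xy: "{x, y} \<in> image f ` edges H"
  obtains u v where "u \<in> verts H" "v \<in> verts H" "x = f u" "y = f v" "{u, v} \<in> edges H"
proof -
  obtain e where e: "e \<in> edges H" "{x, y} = f ` e" using xy by blast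
  obtain u v where uv: "e = {u, v}" "u \<in> verts H" "v \<in> verts H"
    using graph_edgeE[OF H e(1)] by blast
  then have "{u, v} \<in> edges H" "{v, u} \<in> edges H" "{x, y} = {f u, f v}"
    using e by (simp_all add: insert_commute)
  then consider "x = f u" "y = f v" "{u, v} \<in> edges H" | "x = f v" "y = f u" "{v, u} \<in> edges H"
    by (auto simp: doubleton_eq_iff)
  then show ?thesis using uv(2,3) that by cases blast+
qed

lemma shallow_minor_relabel:
  assumes minor: "shallow_minor r G H" and f: "inj_on f (verts H)"
  shows "shallow_minor r G (f ` verts H, image f ` edges H)" (is "shallow_minor r G ?H")
proof -
  have H: "graph H" using minor by (rule shallow_minor_graph)
  have verts: "verts ?H = f ` verts H" and edges: "edges ?H = image f ` edges H"
    by (simp_all add: verts_def edges_def)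
  obtain p :: nat and B \<phi> where
    branch: "\<forall>i<p. B i \<subseteq> verts G \<and> (\<exists>x\<in>B i. \<forall>y\<in>B i. reach_in (edges G) (B i) x r y)" and
    disjoint: "\<forall>i<p. \<forall>j<p. i \<noteq> j \<longrightarrow> B i \<inter> B j = {}" and
    \<phi>: "inj_on \<phi> (verts H)" "\<phi> ` verts H \<subseteq> {..<p}" and
    contracted: "\<forall>u\<in>verts H. \<forall>v\<in>verts H. {u, v} \<in> edges H \<longrightarrow>
        (\<exists>a\<in>B (\<phi> u). \<exists>b\<in>B (\<phi> v). {a, b} \<in> edges G)"
    using minor unfolding shallow_minor_def by (elim conjE exE) (rule that; assumption)
  define \<psi> where "\<psi> = \<phi> \<circ> inv_into (verts H) f"
  have \<psi>: "\<psi> (f u) = \<phi> u" if "u \<in> verts H" for u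
    using f that by (simp add: \<psi>_def)
  show ?thesis
    unfolding shallow_minor_def
  proof (intro conjI exI[of _ p] exI[of _ B] exI[of _ \<psi>])
    show "graph ?H" using H f by (rule graph_image)
    show "inj_on \<psi> (verts ?H)"
      using \<phi>(1) f \<psi> unfolding verts by (auto simp: inj_on_def)
    show "\<psi> ` verts ?H \<subseteq> {..<p}"
      using \<phi>(2) \<psi> unfolding verts by auto
    show "\<forall>x\<in>verts ?H. \<forall>y\<in>verts ?H. {x, y} \<in> edges ?H \<longrightarrow>
        (\<exists>a\<in>B (\<psi> x). \<exists>b\<in>B (\<psi> y). {a, b} \<in> edges G)"
    proof (intro ballI impI)
      fix x y assume "{x, y} \<in> edges ?H"
      then obtain u v where "u \<in> verts H" "v \<in> verts H" "x = f u" "y = f v" "{u, v} \<in> edges H"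
        unfolding edges by (rule edge_imageE[OF H])
      then show "\<exists>a\<in>B (\<psi> x). \<exists>b\<in>B (\<psi> y). {a, b} \<in> edges G" using contracted \<psi> by simp
    qed
  qed (use branch disjoint in auto)
qed

lemma nabla_le_mono: "nabla_le r G C \<Longrightarrow> C \<le> C' \<Longrightarrow> nabla_le r G C'"
  unfolding nabla_le_def by (meson order_trans)

lemma nabla_le_card_edges:
  fixes H :: "'b graph"
  assumes nabla: "nabla_le r G C" and minor: "shallow_minor r G H"
  shows "real (card (edges H)) \<le> C * real (card (verts H))"
proof -
  have H: "graph H" using minor by (rule shallow_minor_graph)
  show ?thesis
  proof (cases "verts H = {}")
    case True
    then have "edges H = {}" using edges_subset_Pow_verts[OF H] by (auto elim: graph_edgeE[OF H])
    then show ?thesis using True by simp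
  next
    case False
    obtain f :: "'b \<Rightarrow> nat" where f: "inj_on f (verts H)"
      using finite_imp_inj_to_nat_seg[OF graph_finite_verts[OF H]] by blast
    define H' where "H' = (f ` verts H, image f ` edges H)"
    have "inj_on (image f) (edges H)"
      by (meson H edges_subset_Pow_verts f inj_on_image_Pow inj_on_subset)
    then have card: "card (verts H') = card (verts H)" "card (edges H') = card (edges H)"
      using f by (simp_all add: H'_def verts_def edges_def card_image)
    have "real (card (edges H')) / real (card (verts H')) \<le> C"
      using nabla shallow_minor_relabel[OF minor f] False
      by (simp add: nabla_le_def H'_def verts_def)
    moreover have "card (verts H) > 0"
      using False H by (simp add: card_gt_0_iff graph_finite_verts)
    ultimately show ?thesis
      using card by (simp add: divide_le_eq mult.commute)
  qed
qed

lemma card_nbr_pairs_le_nabla: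
  assumes G: "graph G" and nabla: "nabla_le 1 G C"
    and L: "L \<subseteq> verts G" and disjoint: "S \<inter> L = {}"
    and nbrs: "\<forall>v\<in>S. a v \<in> L \<and> b v \<in> L \<and> a v \<noteq> b v \<and> {v, a v} \<in> edges G \<and> {v, b v} \<in> edges G"
  shows "real (card ((\<lambda>v. {a v, b v}) ` S)) \<le> C * real (card L)"
proof -
  define H where "H = (L, (\<lambda>v. {a v, b v}) ` S)"
  have verts: "verts H = L" and edges: "edges H = (\<lambda>v. {a v, b v}) ` S"
    by (simp_all add: H_def verts_def edges_def)
  define B where "B x = insert x {v \<in> S. a v = x}" for x
  have "shallow_minor 1 G H"
  proof (rule shallow_minor_of_branch_sets)
    show "graph H"
      using G L nbrs by (auto simp: graph_def verts edges intro: finite_subset)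
    show "\<forall>x\<in>verts H. B x \<subseteq> verts G \<and> x \<in> B x \<and> (\<forall>y\<in>B x. reach_in (edges G) (B x) x 1 y)"
    proof (intro ballI conjI)
      fix x y assume "x \<in> verts H" "y \<in> B x"
      then show "reach_in (edges G) (B x) x 1 y"
        using nbrs by (auto simp: B_def insert_commute)
    qed (use L nbrs graph_edge_verts[OF G] in \<open>auto simp: B_def verts\<close>)
    show "\<forall>x\<in>verts H. \<forall>y\<in>verts H. x \<noteq> y \<longrightarrow> B x \<inter> B y = {}"
      using disjoint by (auto simp: B_def verts)
    show "\<forall>x\<in>verts H. \<forall>y\<in>verts H. {x, y} \<in> edges H \<longrightarrow> (\<exists>p\<in>B x. \<exists>q\<in>B y. {p, q} \<in> edges G)"
    proof (intro ballI impI)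
      fix x y assume "{x, y} \<in> edges H"
      then obtain v where v: "v \<in> S" "{x, y} = {a v, b v}" by (auto simp: edges)
      then consider "x = a v" "y = b v" | "x = b v" "y = a v" by (auto simp: doubleton_eq_iff)
      then show "\<exists>p\<in>B x. \<exists>q\<in>B y. {p, q} \<in> edges G"
      proof cases
        case 1
        then show ?thesis using v nbrs by (auto simp: B_def)
      next
        case 2
        then show ?thesis using v nbrs by (auto simp: B_def insert_commute)
      qed
    qed
  qed
  then show ?thesis using nabla_le_card_edges[OF nabla] by (metis verts edges)
qed

lemma card_le_K2s_free:
  assumes G: "graph G" and free: "K2s_free s G" and S: "finite S"
    and nbrs: "\<forall>v\<in>S. a v \<noteq> b v \<and> {v, a v} \<in> edges G \<and> {v, b v} \<in> edges G"
  shows "card S \<le> s * card ((\<lambda>v. {a v, b v}) ` S)"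
proof -
  define P where "P = (\<lambda>v. {a v, b v}) ` S"
  define fibre where "fibre e = {v \<in> S. {a v, b v} = e}" for e
  have fibre: "card (fibre e) \<le> s" if e: "e \<in> P" for e
  proof (rule ccontr)
    assume "\<not> card (fibre e) \<le> s"
    then have "s \<le> card (fibre e)" by simp
    then obtain X where X: "X \<subseteq> fibre e" "card X = s" "finite X"
      by (rule obtain_subset_with_card_n)
    obtain v where v: "v \<in> S" "e = {a v, b v}" using e by (auto simp: P_def)
    have X_edges: "{a v, x} \<in> edges G \<and> {b v, x} \<in> edges G" if "x \<in> X" for x
    proof -
      have "x \<in> S" "{a x, b x} = {a v, b v}" using that X(1) v(2) by (auto simp: fibre_def)
      then have "{a v, b v} \<subseteq> {a x, b x}" "{x, a x} \<in> edges G" "{x, b x} \<in> edges G"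
        using nbrs by auto
      then show ?thesis by (auto simp: insert_commute)
    qed
    have "X \<subseteq> verts G - {a v, b v}"
    proof
      fix x assume "x \<in> X"
      with X_edges have "{a v, x} \<in> edges G" "{b v, x} \<in> edges G" by blast+
      then show "x \<in> verts G - {a v, b v}"
        using graph_edge_verts[OF G] graph_edge_neq[OF G] by blast
    qed
    moreover have "a v \<in> verts G" "b v \<in> verts G" "a v \<noteq> b v"
      using nbrs v(1) graph_edge_verts[OF G] by blast+
    ultimately have "\<exists>a b S. a \<in> verts G \<and> b \<in> verts G \<and> a \<noteq> b \<and>
        S \<subseteq> verts G - {a, b} \<and> card S = s \<and> finite S \<and>
        (\<forall>x\<in>S. {a, x} \<in> edges G \<and> {b, x} \<in> edges G)"
      using X X_edges by blast
    with free show False unfolding K2s_free_def by (rule notE)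
  qed
  have "S = (\<Union>e\<in>P. fibre e)" by (auto simp: P_def fibre_def)
  then have "card S \<le> (\<Sum>e\<in>P. card (fibre e))"
    by (metis card_UN_le P_def S finite_imageI)
  also have "\<dots> \<le> (\<Sum>e\<in>P. s)" using fibre by (rule sum_mono)
  finally show ?thesis by (simp add: P_def mult.commute)
qed

lemma card_high_degree_le:
  assumes H: "graph H"
  shows "card {v \<in> verts H. d < degree H v} * (d + 1) \<le> 2 * card (edges H)"
proof -
  let ?high = "{v \<in> verts H. d < degree H v}"
  have "card ?high * (d + 1) \<le> (\<Sum>v\<in>?high. degree H v)"
    using sum_mono[of ?high "\<lambda>_. d + 1" "degree H"] by simp
  also have "\<dots> \<le> (\<Sum>v\<in>verts H. degree H v)"
    using H by (intro sum_mono2) (auto simp: graph_finite_verts)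
  also have "\<dots> \<le> 2 * card (edges H)" by (rule sum_degree_le[OF H])
  finally show ?thesis .
qed

lemma high_degree_nbr_pairs:
  assumes H: "graph H" and none: "\<nexists>v. removable d H v"
  obtains a b where "\<forall>v\<in>verts H. degree H v \<le> d \<longrightarrow>
      a v \<noteq> b v \<and> a v \<in> nbrs H v \<and> b v \<in> nbrs H v \<and> d < degree H (a v) \<and> d < degree H (b v)"
proof -
  have "\<exists>x y. x \<noteq> y \<and> x \<in> nbrs H v \<and> y \<in> nbrs H v \<and> d < degree H x \<and> d < degree H y"
    if "v \<in> verts H" "degree H v \<le> d" for v
  proof -
    let ?A = "{w \<in> nbrs H v. d < degree H w}"
    have "\<not> card ?A \<le> Suc 0"
      using none that by (auto simp: removable_def)
    then have "\<exists>x\<in>?A. \<exists>y\<in>?A. x \<noteq> y"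
      using card_le_Suc0_iff_eq[of ?A] H by (auto simp: graph_finite_nbrs)
    then show ?thesis by auto
  qed
  then have "\<forall>v\<in>{v \<in> verts H. degree H v \<le> d}. \<exists>x y.
      x \<noteq> y \<and> x \<in> nbrs H v \<and> y \<in> nbrs H v \<and> d < degree H x \<and> d < degree H y"
    by blast
  from bchoice[OF this] obtain a where "\<forall>v\<in>{v \<in> verts H. degree H v \<le> d}. \<exists>y.
      a v \<noteq> y \<and> a v \<in> nbrs H v \<and> y \<in> nbrs H v \<and> d < degree H (a v) \<and> d < degree H y"
    by blast
  from bchoice[OF this] obtain b where "\<forall>v\<in>{v \<in> verts H. degree H v \<le> d}.
      a v \<noteq> b v \<and> a v \<in> nbrs H v \<and> b v \<in> nbrs H v \<and> d < degree H (a v) \<and> d < degree H (b v)"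
    by blast
  then show ?thesis using that by blast
qed

lemma strongly_degenerate_if_K2s_free:
  fixes C :: real
  assumes G: "graph G" and nabla: "nabla_le 1 G C" and C: "C \<ge> 0" and free: "K2s_free s G"
    and d: "2 * C * (1 + s * C) < d + 1"
  shows "strongly_degenerate d G"
  unfolding strongly_degenerate_def
proof (intro allI impI)
  fix H assume "subgraph H G \<and> verts H \<noteq> {}"
  then have sub: "subgraph H G" and H: "graph H" and ne: "verts H \<noteq> {}"
    by (auto simp: subgraph_def)
  show "\<exists>v. removable d H v"
  proof (rule ccontr)
    assume "\<nexists>v. removable d H v"
    then obtain a b where ab: "\<forall>v\<in>verts H. degree H v \<le> d \<longrightarrow>
        a v \<noteq> b v \<and> a v \<in> nbrs H v \<and> b v \<in> nbrs H v \<and> d < degree H (a v) \<and> d < degree H (b v)"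
      using high_degree_nbr_pairs[OF H] by blast
    define high where "high = {v \<in> verts H. d < degree H v}"
    define low where "low = verts H - high"
    have "edges H \<subseteq> edges G" using sub by (simp add: subgraph_def)
    then have ab_low: "\<forall>v\<in>low. a v \<in> high \<and> b v \<in> high \<and> a v \<noteq> b v \<and>
        {v, a v} \<in> edges G \<and> {v, b v} \<in> edges G"
      using ab by (auto simp: low_def high_def nbrs_def)
    have fin: "finite low" "finite high" using H by (auto simp: low_def high_def graph_finite_verts)
    define n where "n = real (card (verts H))"
    define l where "l = real (card high)"
    have "l * (d + 1) \<le> 2 * real (card (edges H))"
      using card_high_degree_le[OF H, of d] unfolding l_def high_def
      by (metis of_nat_le_iff of_nat_mult of_nat_numeral)
    moreover have "real (card (edges H)) \<le> C * n"
      unfolding n_def using nabla_le_card_edges[OF nabla subgraph_imp_shallow_minor[OF sub]] .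
    ultimately have high_le: "l * (d + 1) \<le> 2 * C * n" by linarith
    have "card low \<le> s * card ((\<lambda>v. {a v, b v}) ` low)"
      using card_le_K2s_free[OF G free fin(1)] ab_low by blast
    then have "real (card low) \<le> s * real (card ((\<lambda>v. {a v, b v}) ` low))"
      by (metis of_nat_le_iff of_nat_mult)
    also have "\<dots> \<le> s * (C * l)"
      unfolding l_def using sub ab_low
      by (intro mult_left_mono card_nbr_pairs_le_nabla[OF G nabla])
        (auto simp: subgraph_def high_def low_def)
    finally have "n \<le> (1 + s * C) * l"
      using fin by (simp add: n_def l_def low_def high_def card_Diff_subset card_mono algebra_simps)
    then have "n * (d + 1) \<le> (1 + s * C) * (l * (d + 1))"
      by (simp add: mult_right_mono mult.assoc)
    also have "\<dots> \<le> (1 + s * C) * (2 * C * n)"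
      using high_le C by (intro mult_left_mono) auto
    also have "\<dots> < (d + 1) * n"
      using ne H mult_strict_right_mono[OF d, of n]
      by (simp add: n_def card_gt_0_iff graph_finite_verts algebra_simps)
    finally show False by simp
  qed
qed

definition nbr_local :: "'a graph \<Rightarrow> ('a \<Rightarrow> ('a \<Rightarrow> 'c) \<Rightarrow> 'b) \<Rightarrow> bool" where
  "nbr_local G F \<longleftrightarrow> (\<forall>w\<in>verts G. \<forall>c c'. (\<forall>x\<in>nbrs G w. c x = c' x) \<longrightarrow> F w c = F w c')"

definition palette :: "nat \<Rightarrow> nat" where
  "palette d = 4 * d * ((4 * d) ^ d + 1)"

text \<open>For degree above d the exponent truncates to 0: such vertices forbid at most one colour.\<close>

definition forbidden_bounded :: "nat \<Rightarrow> 'a graph \<Rightarrow> ('a \<Rightarrow> ('a \<Rightarrow> nat) \<Rightarrow> nat set) \<Rightarrow> bool" where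
  "forbidden_bounded d G F \<longleftrightarrow>
     (\<forall>w\<in>verts G. \<forall>c. F w c \<subseteq> {..<palette d} \<and> card (F w c) \<le> (4 * d) ^ (d - degree G w))"

lemma card_often_covered_le:
  assumes X: "finite X" and Z: "finite Z" and A: "\<forall>z\<in>Z. A z \<subseteq> X \<and> card (A z) \<le> b"
  shows "card {x \<in> X. k \<le> card {z \<in> Z. x \<in> A z}} * k \<le> card Z * b"
proof -
  define Y where "Y = {x \<in> X. k \<le> card {z \<in> Z. x \<in> A z}}"
  have "card Y * k \<le> (\<Sum>x\<in>Y. card {z \<in> Z. x \<in> A z})"
    using sum_mono[of Y "\<lambda>_. k"] by (simp add: Y_def)
  also have "\<dots> \<le> (\<Sum>x\<in>X. card {z \<in> Z. x \<in> A z})"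
    using X by (intro sum_mono2) (auto simp: Y_def)
  also have "\<dots> = (\<Sum>x\<in>X. \<Sum>z\<in>Z. if x \<in> A z then 1 else 0)"
    using Z by (simp add: sum.inter_filter[symmetric])
  also have "\<dots> = (\<Sum>z\<in>Z. \<Sum>x\<in>X. if x \<in> A z then 1 else 0)"
    by (rule sum.swap)
  also have "\<dots> = (\<Sum>z\<in>Z. card {x \<in> X. x \<in> A z})"
    using X by (simp add: sum.inter_filter[symmetric])
  also have "\<dots> \<le> (\<Sum>z\<in>Z. b)"
  proof (rule sum_mono)
    fix z assume "z \<in> Z"
    then have "{x \<in> X. x \<in> A z} = A z" using A by blast
    then show "card {x \<in> X. x \<in> A z} \<le> b" using A \<open>z \<in> Z\<close> by simp
  qed
  finally show ?thesis by (simp add: Y_def)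
qed

definition frequently_forbidden ::
    "(('a \<Rightarrow> nat) \<Rightarrow> nat set) \<Rightarrow> 'a \<Rightarrow> nat \<Rightarrow> nat \<Rightarrow> ('a \<Rightarrow> nat) \<Rightarrow> nat set" where
  "frequently_forbidden Fw u Q k c = {x \<in> {..<Q}. k \<le> card {z \<in> {..<Q}. x \<in> Fw (c(u := z))}}"

lemma card_frequently_forbidden_le:
  assumes "\<forall>z<Q. Fw (c(u := z)) \<subseteq> {..<Q} \<and> card (Fw (c(u := z))) \<le> b"
  shows "card (frequently_forbidden Fw u Q k c) * k \<le> Q * b"
  using card_often_covered_le[of "{..<Q}" "{..<Q}" "\<lambda>z. Fw (c(u := z))" b k] assms
  by (simp add: frequently_forbidden_def)

locale vertex_removal =
  fixes d :: nat and G :: "'a graph" and u :: 'a and F :: "'a \<Rightarrow> ('a \<Rightarrow> nat) \<Rightarrow> nat set"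
  assumes graph: "graph G" and d_pos: "1 \<le> d" and removable: "removable d G u"
    and local: "nbr_local G F" and bounded: "forbidden_bounded d G F"
begin

definition K :: nat where "K = (4 * d) ^ d + 1"

text \<open>
  The unique neighbour of u of degree > d gets a threshold so high that it forbids at most one
  colour after lifting; the other neighbours forbid 4d times more colours, which their bound
  allows because they lose u as a neighbour.
\<close>

definition threshold :: "'a \<Rightarrow> nat" where
  "threshold w = (if d < degree G w then 2 * d * K + 1 else K)"

definition lifted :: "'a \<Rightarrow> ('a \<Rightarrow> nat) \<Rightarrow> nat set" where
  "lifted w = (if w \<in> nbrs G u then frequently_forbidden (F w) u (palette d) (threshold w) else F w)"

definition hits :: "('a \<Rightarrow> nat) \<Rightarrow> 'a \<Rightarrow> nat set" where
  "hits c w = {z \<in> {..<palette d}. c w \<in> F w (c(u := z))}"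

lemma u_removable: "u \<in> verts G" "degree G u \<le> d" "card {w \<in> nbrs G u. d < degree G w} \<le> 1"
  using removable by (auto simp: removable_def)

lemma palette_eq: "palette d = 4 * d * K"
  by (simp add: palette_def K_def)

lemma K_pos: "0 < K"
  by (simp add: K_def)

lemma F_cong:
  "w \<in> verts G \<Longrightarrow> (\<forall>x\<in>nbrs G w. c x = c' x) \<Longrightarrow> F w c = F w c'"
  using local by (simp add: nbr_local_def)

lemma nbr_local_lifted: "nbr_local (delete_vertex G u) lifted"
  unfolding nbr_local_def
proof (intro ballI allI impI)
  fix w and c c' :: "'a \<Rightarrow> nat"
  assume w: "w \<in> verts (delete_vertex G u)" and agree: "\<forall>x\<in>nbrs (delete_vertex G u) w. c x = c' x"
  then have wG: "w \<in> verts G" "w \<noteq> u" by auto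
  have agree': "\<forall>x\<in>nbrs G w - {u}. c x = c' x" using agree nbrs_delete_vertex[OF wG(2)] by simp
  show "lifted w c = lifted w c'"
  proof (cases "w \<in> nbrs G u")
    case True
    have "F w (c(u := z)) = F w (c'(u := z))" for z
      using agree' by (intro F_cong[OF wG(1)]) auto
    then show ?thesis using True by (simp add: lifted_def frequently_forbidden_def)
  next
    case False
    then have "u \<notin> nbrs G w" using nbrs_sym wG(1) by metis
    then have "F w c = F w c'" using agree' by (intro F_cong[OF wG(1)]) auto
    then show ?thesis using False by (simp add: lifted_def)
  qed
qed

lemma card_lifted_nbr_le:
  assumes w: "w \<in> nbrs G u"
  shows "card (lifted w c) \<le> (4 * d) ^ (d - degree (delete_vertex G u) w)"
proof -
  let ?b = "(4 * d) ^ (d - degree G w)"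
  have "w \<in> verts G" using w nbrs_subset_verts[of G u] by blast
  then have "\<forall>z<palette d. F w (c(u := z)) \<subseteq> {..<palette d} \<and> card (F w (c(u := z))) \<le> ?b"
    using bounded by (simp add: forbidden_bounded_def)
  then have count: "card (lifted w c) * threshold w \<le> palette d * ?b"
    using w card_frequently_forbidden_le by (simp add: lifted_def)
  show ?thesis
  proof (cases "d < degree G w")
    case True
    then have "card (lifted w c) * (2 * d * K + 1) < 2 * (2 * d * K + 1)"
      using count by (simp add: threshold_def palette_eq)
    then have "card (lifted w c) < 2" by (metis mult_less_cancel2)
    then have "card (lifted w c) \<le> 1" by simp
    moreover have "1 \<le> (4 * d) ^ (d - degree (delete_vertex G u) w)" using d_pos by simp
    ultimately show ?thesis by linarith
  next
    case False
    then have "card (lifted w c) * K \<le> (4 * d * ?b) * K"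
      using count by (simp add: threshold_def palette_eq ac_simps)
    then have "card (lifted w c) \<le> 4 * d * ?b" using K_pos by (simp only: mult_le_cancel2)
    also have "\<dots> = (4 * d) ^ Suc (d - degree G w)" by simp
    also have "Suc (d - degree G w) = d - degree (delete_vertex G u) w"
      using False degree_delete_vertex_nbr[OF graph u_removable(1) w] by simp
    finally show ?thesis .
  qed
qed

lemma forbidden_bounded_lifted: "forbidden_bounded d (delete_vertex G u) lifted"
  unfolding forbidden_bounded_def
proof (intro ballI allI conjI)
  fix w c assume "w \<in> verts (delete_vertex G u)"
  then have wG: "w \<in> verts G" "w \<noteq> u" by auto
  have F: "F w c \<subseteq> {..<palette d}" "card (F w c) \<le> (4 * d) ^ (d - degree G w)"
    using bounded wG(1) by (auto simp: forbidden_bounded_def)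
  show "lifted w c \<subseteq> {..<palette d}"
    using F(1) by (auto simp: lifted_def frequently_forbidden_def)
  show "card (lifted w c) \<le> (4 * d) ^ (d - degree (delete_vertex G u) w)"
    using F(2) card_lifted_nbr_le degree_delete_vertex_non_nbr[OF wG] by (cases "w \<in> nbrs G u") (simp_all add: lifted_def)
qed

lemma card_blocked_colours_less:
  assumes hits: "\<forall>w\<in>nbrs G u. card (hits c w) < threshold w"
  shows "card (F u c \<union> (\<Union>w\<in>nbrs G u. hits c w)) < palette d"
proof -
  let ?N = "nbrs G u"
  have fin: "finite ?N" using graph by (rule graph_finite_nbrs)
  have "card (F u c) \<le> (4 * d) ^ (d - degree G u)"
    using bounded u_removable(1) by (simp add: forbidden_bounded_def)
  also have "\<dots> \<le> (4 * d) ^ d" using d_pos by (intro power_increasing) auto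
  finally have Fu: "card (F u c) < K" by (simp add: K_def)
  have "card (\<Union>w\<in>?N. hits c w) \<le> (\<Sum>w\<in>?N. card (hits c w))"
    using fin by (rule card_UN_le)
  also have "\<dots> \<le> (\<Sum>w\<in>?N. K + (if d < degree G w then 2 * d * K else 0))"
    using hits by (intro sum_mono) (fastforce simp: threshold_def split: if_splits)
  also have "\<dots> = card ?N * K + (\<Sum>w\<in>?N. if d < degree G w then 2 * d * K else 0)"
    by (simp add: sum.distrib)
  also have "\<dots> = card ?N * K + (\<Sum>w\<in>{w \<in> ?N. d < degree G w}. 2 * d * K)"
    by (simp only: sum.inter_filter[OF fin])
  also have "\<dots> = card ?N * K + 2 * d * K * card {w \<in> ?N. d < degree G w}"
    by simp
  also have "\<dots> \<le> d * K + 2 * d * K * 1"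
    using u_removable by (intro add_mono mult_mono) (auto simp: degree_def)
  finally have "card (\<Union>w\<in>?N. hits c w) \<le> 3 * d * K" by simp
  then have "card (F u c \<union> (\<Union>w\<in>?N. hits c w)) < K + 3 * d * K"
    using Fu card_Un_le[of "F u c" "\<Union>w\<in>?N. hits c w"] by linarith
  also have "\<dots> \<le> palette d" using d_pos by (simp add: palette_eq)
  finally show ?thesis .
qed

lemma extend_avoiding_colouring:
  assumes c: "\<forall>v\<in>verts G - {u}. c v < palette d \<and> c v \<notin> lifted v c"
  shows "\<exists>z. \<forall>v\<in>verts G. (c(u := z)) v < palette d \<and> (c(u := z)) v \<notin> F v (c(u := z))"
proof -
  have nbr: "w \<in> verts G - {u}" if "w \<in> nbrs G u" for w
    using that self_notin_nbrs[OF graph, of u] nbrs_subset_verts[of G u] by auto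
  have "card (hits c w) < threshold w" if "w \<in> nbrs G u" for w
  proof -
    have "c w < palette d \<and> c w \<notin> lifted w c" using c nbr[OF that] by blast
    then have "c w < palette d" "c w \<notin> frequently_forbidden (F w) u (palette d) (threshold w) c"
      using that by (simp_all add: lifted_def)
    then show ?thesis by (simp add: frequently_forbidden_def hits_def)
  qed
  then have "card (F u c \<union> (\<Union>w\<in>nbrs G u. hits c w)) < palette d"
    by (intro card_blocked_colours_less) blast
  moreover have "F u c \<union> (\<Union>w\<in>nbrs G u. hits c w) \<subseteq> {..<palette d}"
    using bounded u_removable(1) by (auto simp: forbidden_bounded_def hits_def)
  ultimately have "\<not> {..<palette d} \<subseteq> F u c \<union> (\<Union>w\<in>nbrs G u. hits c w)"
    by (metis card_lessThan card_mono finite_lessThan finite_subset not_le)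
  then obtain z where z: "z < palette d" "z \<notin> F u c" "\<forall>w\<in>nbrs G u. z \<notin> hits c w"
    by blast
  have "(c(u := z)) v < palette d \<and> (c(u := z)) v \<notin> F v (c(u := z))" if v: "v \<in> verts G" for v
  proof (cases "v = u")
    case True
    have "F u (c(u := z)) = F u c"
      using self_notin_nbrs[OF graph] by (intro F_cong[OF u_removable(1)]) auto
    then show ?thesis using True z by simp
  next
    case False
    show ?thesis
    proof (cases "v \<in> nbrs G u")
      case True
      then show ?thesis using False z c v by (auto simp: hits_def)
    next
      case notnbr: False
      then have "u \<notin> nbrs G v" using nbrs_sym v by metis
      then have "F v (c(u := z)) = F v c" by (intro F_cong[OF v]) auto
      moreover have "c v < palette d \<and> c v \<notin> lifted v c" using c v False by blast
      ultimately show ?thesis using False notnbr by (simp add: lifted_def)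
    qed
  qed
  then show ?thesis by blast
qed

end

lemma ex_colouring_avoiding_forbidden:
  assumes "graph G" "1 \<le> d" "strongly_degenerate d G" "nbr_local G F" "forbidden_bounded d G F"
  shows "\<exists>c. \<forall>v\<in>verts G. c v < palette d \<and> c v \<notin> F v c"
  using assms
proof (induction "card (verts G)" arbitrary: G F)
  case 0
  then show ?case by (simp add: graph_finite_verts)
next
  case (Suc n)
  have "subgraph G G" "verts G \<noteq> {}" using Suc by (auto simp: subgraph_def)
  then obtain u where u: "removable d G u"
    using Suc.prems(3) unfolding strongly_degenerate_def by blast
  interpret vertex_removal d G u F
    using Suc.prems u by unfold_locales
  have sub: "subgraph (delete_vertex G u) G" using Suc.prems(1) by (rule subgraph_delete_vertex)
  have "n = card (verts (delete_vertex G u))"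
    using Suc.hyps(2) u_removable(1) by simp
  moreover have "graph (delete_vertex G u)" using sub by (simp add: subgraph_def)
  moreover have "strongly_degenerate d (delete_vertex G u)"
    using Suc.prems(3) sub by (rule strongly_degenerate_subgraph)
  ultimately obtain c where "\<forall>v\<in>verts G - {u}. c v < palette d \<and> c v \<notin> lifted v c"
    using Suc.hyps(1) Suc.prems(2) nbr_local_lifted forbidden_bounded_lifted by fastforce
  then show ?case by (rule extend_avoiding_colouring[THEN exE]) blast
qed

lemma hat_guessing_win_imp_less_palette:
  assumes G: "graph G" and d: "1 \<le> d" and sd: "strongly_degenerate d G"
    and win: "hat_guessing_win G q"
  shows "q < palette d"
proof (rule ccontr)
  assume "\<not> q < palette d"
  obtain f :: "'a \<Rightarrow> ('a \<Rightarrow> nat) \<Rightarrow> nat" where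
    f: "\<forall>c. (\<forall>v\<in>verts G. c v < q) \<longrightarrow> (\<exists>v\<in>verts G. f v (restrict c (nbrs G v)) = c v)"
    using win by (auto simp: hat_guessing_win_def)
  define F where "F v c = {f v (restrict c (nbrs G v))} \<inter> {..<palette d}" for v c
  have "nbr_local G F"
    unfolding nbr_local_def F_def by (metis restrict_ext)
  moreover have "forbidden_bounded d G F"
    unfolding forbidden_bounded_def
  proof (intro ballI allI conjI)
    fix w c
    show "F w c \<subseteq> {..<palette d}" by (simp add: F_def)
    have "card (F w c) \<le> card {f w (restrict c (nbrs G w))}"
      unfolding F_def by (intro card_mono) auto
    also have "\<dots> \<le> (4 * d) ^ (d - degree G w)" using d by simp
    finally show "card (F w c) \<le> (4 * d) ^ (d - degree G w)" .
  qed
  ultimately obtain c where c: "\<forall>v\<in>verts G. c v < palette d \<and> c v \<notin> F v c"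
    using ex_colouring_avoiding_forbidden[OF G d sd] by blast
  then have "\<forall>v\<in>verts G. c v < q" using \<open>\<not> q < palette d\<close> by auto
  then obtain v where "v \<in> verts G" "f v (restrict c (nbrs G v)) = c v"
    using f by blast
  then show False using c by (auto simp: F_def)
qed

lemma palette_le:
  assumes "1 \<le> d" shows "palette d \<le> (2 * (4 * d)) ^ (4 * d)"
proof -
  have "1 \<le> (4 * d) ^ d" using assms by simp
  then have "palette d \<le> 4 * d * ((4 * d) ^ d + (4 * d) ^ d)"
    unfolding palette_def by (intro mult_left_mono) auto
  also have "\<dots> = (8 * d) * (4 * d) ^ d" by simp
  also have "\<dots> \<le> (8 * d) * (8 * d) ^ d" by (intro mult_left_mono power_mono) auto
  also have "\<dots> = (8 * d) ^ Suc d" by simp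
  also have "\<dots> \<le> (8 * d) ^ (4 * d)" using assms by (intro power_increasing) auto
  finally show ?thesis by simp
qed

theorem corollary1p6:
  fixes \<G> :: "'a graph set" and s :: nat
  assumes "\<forall>G\<in>\<G>. graph G"
    and "bounded_expansion \<G>"
  shows "\<exists>d::nat. d \<ge> 1 \<and> (\<forall>G\<in>\<G>. K2s_free s G \<longrightarrow>
           strongly_degenerate d G \<and> (\<forall>q. hat_guessing_win G q \<longrightarrow> q \<le> (2 * d) ^ d))"
proof -
  obtain C0 where "\<forall>G\<in>\<G>. nabla_le 1 G C0"
    using assms(2) unfolding bounded_expansion_def by blast
  define C where "C = max C0 0"
  have nabla: "nabla_le 1 G C" if "G \<in> \<G>" for G
    using that \<open>\<forall>G\<in>\<G>. nabla_le 1 G C0\<close> nabla_le_mono by (metis C_def max.cobounded1)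
  have "C \<ge> 0" by (simp add: C_def)
  define d where "d = nat \<lceil>2 * C * (1 + s * C)\<rceil> + 1"
  have d: "2 * C * (1 + s * C) < real d + 1" and "1 \<le> d"
    unfolding d_def by linarith+
  text \<open>palette d is not of the form (2D)^D, so we pass to the larger degeneracy 4d.\<close>
  show ?thesis
  proof (intro exI[of _ "4 * d"] conjI ballI impI allI)
    fix G assume G: "G \<in> \<G>" "K2s_free s G"
    have "graph G" using assms(1) G(1) by blast
    then have sd: "strongly_degenerate d G"
      using strongly_degenerate_if_K2s_free[OF _ nabla[OF G(1)] \<open>C \<ge> 0\<close> G(2) d] by blast
    then show "strongly_degenerate (4 * d) G" by (rule strongly_degenerate_mono[rotated]) simp
    fix q assume "hat_guessing_win G q"
    then have "q < palette d"
      using hat_guessing_win_imp_less_palette[OF \<open>graph G\<close> \<open>1 \<le> d\<close> sd] by blast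
    then show "q \<le> (2 * (4 * d)) ^ (4 * d)" using palette_le[OF \<open>1 \<le> d\<close>] by simp
  qed (use \<open>1 \<le> d\<close> in simp)
qed

end
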